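(* Every solution $(x(t),y(t))$ of the system (FHN-CNN) with initial state $(x^0,y^0)\in H$ satisfies, for all $t\ge 0$, $$\sum_{i=1}^n\big(|x_i(t)|^2+|y_i(t)|^2\big)\le\frac{1}{\min\{C_1,1\}}\Big[e^{-\delta t}\sum_{i=1}^n\big(C_1|x_i^0|^2+|y_i^0|^2\big)+\frac{n}{\delta}\Big(C_2+\frac{\delta\beta}{b}\Big)\Big],$$ where $C_1=\frac{\delta}{2b}$ and $C_2=\frac{b}{4\delta\lambda}\Big(\frac{\delta^2}{2b}+\frac{\delta}{2}+\frac{2c^2}{\delta}\Big)^2$.
   Context: Fix an integer $n\ge 4$ and positive constants $a,b,c,\delta,p$. Let $f\in C^1(\mathbb{R},\mathbb{R})$ satisfy, for some positive constants $\lambda,\beta,\gamma$: $f(s)s\le -\lambda s^4+\beta$ and $f'(s)\le\gamma$ for all $s\in\mathbb{R}$. The FitzHugh–Nagumo cellular neural network with boundary feedback (FHN-CNN) is the ODE system for $t>0$, $1\le i\le n$: $$\frac{dx_i}{dt}=a(x_{i-1}-2x_i+x_{i+1})+f(x_i)-by_i+pu_i,\qquad \frac{dy_i}{dt}=cx_i-\delta y_i,$$ with the periodic convention $x_0=x_n$, $x_{n+1}=x_1$, and the boundary feedback $u_1=u_{n+1}=x_n-x_1$, $u_i=0$ for $2\le i\le n-1$, $u_n=u_0=x_1-x_n$. The state space is $H=\mathbb{R}^{2n}$ with norm $\|(x,y)\|^2=\sum_{i=1}^n(|x_i|^2+|y_i|^2)$; initial data $x_i(0)=x_i^0$, $y_i(0)=y_i^0$.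 *)

theory Defs
  imports Complex_Main
begin

text \<open>States are functions nat => real, used on indices 1..n.
  Periodic convention: index 0 means n, index n+1 means 1.\<close>
definition xper :: "nat \<Rightarrow> (nat \<Rightarrow> real) \<Rightarrow> nat \<Rightarrow> real" where
  "xper n v i = (if i = 0 then v n else if i = n + 1 then v 1 else v i)"

definition fb :: "nat \<Rightarrow> (nat \<Rightarrow> real) \<Rightarrow> nat \<Rightarrow> real" where
  "fb n v i = (if i = 1 then v n - v 1 else if i = n then v 1 - v n else 0)"

definition FHN_solution ::
  "nat \<Rightarrow> real \<Rightarrow> real \<Rightarrow> real \<Rightarrow> real \<Rightarrow> real \<Rightarrow> (real \<Rightarrow> real) \<Rightarrow>
   (nat \<Rightarrow> real) \<Rightarrow> (nat \<Rightarrow> real) \<Rightarrow> (real \<Rightarrow> nat \<Rightarrow> real) \<Rightarrow> (real \<Rightarrow> nat \<Rightarrow> real) \<Rightarrow> bool"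
where
  "FHN_solution n a b c \<delta> p f x0 y0 x y \<longleftrightarrow>
    (\<forall>i\<in>{1..n}.
       continuous_on {0..} (\<lambda>t. x t i) \<and> continuous_on {0..} (\<lambda>t. y t i) \<and>
       x 0 i = x0 i \<and> y 0 i = y0 i \<and>
       (\<forall>t>0.
          ((\<lambda>s. x s i) has_real_derivative
             (a * (xper n (x t) (i - 1) - 2 * x t i + xper n (x t) (i + 1))
              + f (x t i) - b * y t i + p * fb n (x t) i)) (at t) \<and>
          ((\<lambda>s. y s i) has_real_derivative (c * x t i - \<delta> * y t i)) (at t)))"

end

theory Submission imports Defs begin

text \<open>The weighted energy \<open>E = \<Sum>i. C\<^sub>1 x\<^sub>i\<^sup>2 + y\<^sub>i\<^sup>2\<close> with \<open>C\<^sub>1 = \<delta>/(2b)\<close> turns the coupling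
  terms into the single cross term \<open>(2c - \<delta>) x\<^sub>i y\<^sub>i\<close>. Along solutions, the discrete Laplacian and the
  boundary feedback only dissipate energy, and Young's inequality absorbs the cross term and
  the quadratic terms into the quartic dissipation \<open>-\<lambda> x\<^sub>i\<^sup>4\<close> of \<open>f\<close>, leaving
  \<open>E' + \<delta> E \<le> n (C\<^sub>2 + \<delta>\<beta>/b)\<close>. A Gronwall argument integrates this, and \<open>min C\<^sub>1 1\<close> compares
  \<open>E\<close> with the squared norm.\<close>

definition weighted_energy :: "nat \<Rightarrow> real \<Rightarrow> (nat \<Rightarrow> real) \<Rightarrow> (nat \<Rightarrow> real) \<Rightarrow> real" where
  "weighted_energy n k v w = (\<Sum>i=1..n. k * (v i)\<^sup>2 + (w i)\<^sup>2)"

definition discrete_laplacian :: "nat \<Rightarrow> (nat \<Rightarrow> real) \<Rightarrow> nat \<Rightarrow> real" where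
  "discrete_laplacian n v i = xper n v (i - 1) - 2 * v i + xper n v (i + 1)"

definition fhn_drift ::
  "nat \<Rightarrow> real \<Rightarrow> real \<Rightarrow> real \<Rightarrow> (real \<Rightarrow> real) \<Rightarrow> (nat \<Rightarrow> real) \<Rightarrow> (nat \<Rightarrow> real) \<Rightarrow> nat \<Rightarrow> real"
where
  "fhn_drift n a b p f v w i = a * discrete_laplacian n v i + f (v i) - b * w i + p * fb n v i"

lemma sum_xper_pred_square:
  assumes "n \<ge> 2"
  shows "(\<Sum>i=1..n. (xper n v (i - 1))\<^sup>2) = (\<Sum>i=1..n. (v i)\<^sup>2)"
proof -
  obtain m where m: "n = Suc m" "m \<ge> 1" using assms by (cases n) auto
  have "(\<Sum>i=1..n. (xper n v (i - 1))\<^sup>2) = (xper n v 0)\<^sup>2 + (\<Sum>i=Suc 1..Suc m. (xper n v (i - 1))\<^sup>2)"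
    using m by (simp add: sum.atLeast_Suc_atMost)
  also have "(\<Sum>i=Suc 1..Suc m. (xper n v (i - 1))\<^sup>2) = (\<Sum>i=1..m. (xper n v i)\<^sup>2)"
    by (subst sum.shift_bounds_cl_Suc_ivl) simp
  also have "\<dots> = (\<Sum>i=1..m. (v i)\<^sup>2)"
    using m by (intro sum.cong) (auto simp: xper_def)
  finally show ?thesis using m by (simp add: xper_def)
qed

lemma sum_xper_succ_square:
  assumes "n \<ge> 2"
  shows "(\<Sum>i=1..n. (xper n v (i + 1))\<^sup>2) = (\<Sum>i=1..n. (v i)\<^sup>2)"
proof -
  obtain m where m: "n = Suc m" "m \<ge> 1" using assms by (cases n) auto
  have "(\<Sum>i=1..n. (xper n v (i + 1))\<^sup>2) = (\<Sum>i=1..m. (xper n v (i + 1))\<^sup>2) + (xper n v (n + 1))\<^sup>2"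
    using m by simp
  also have "(\<Sum>i=1..m. (xper n v (i + 1))\<^sup>2) = (\<Sum>i=1..m. (v (Suc i))\<^sup>2)"
    using m by (intro sum.cong) (auto simp: xper_def)
  also have "\<dots> = (\<Sum>i=Suc 1..Suc m. (v i)\<^sup>2)"
    by (subst sum.shift_bounds_cl_Suc_ivl) simp
  finally show ?thesis using m by (simp add: xper_def sum.atLeast_Suc_atMost add.commute)
qed

lemma sum_mult_discrete_laplacian_nonpos:
  assumes "n \<ge> 2"
  shows "(\<Sum>i=1..n. v i * discrete_laplacian n v i) \<le> 0"
proof -
  have "(\<Sum>i=1..n. v i * discrete_laplacian n v i)
     \<le> (\<Sum>i=1..n. ((xper n v (i - 1))\<^sup>2 + (xper n v (i + 1))\<^sup>2) / 2 - (v i)\<^sup>2)"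
  proof (rule sum_mono)
    fix i
    show "v i * discrete_laplacian n v i \<le> ((xper n v (i - 1))\<^sup>2 + (xper n v (i + 1))\<^sup>2) / 2 - (v i)\<^sup>2"
      using sum_squares_ge_zero[of "v i - xper n v (i - 1)" "v i - xper n v (i + 1)"]
      by (simp add: discrete_laplacian_def power2_eq_square algebra_simps)
  qed
  also have "\<dots> = 0"
    using sum_xper_pred_square[OF assms, of v] sum_xper_succ_square[OF assms, of v]
    by (simp add: sum_subtractf sum_divide_distrib[symmetric] sum.distrib)
  finally show ?thesis .
qed

lemma sum_mult_fb_eq:
  assumes "n \<ge> 2"
  shows "(\<Sum>i=1..n. v i * fb n v i) = - (v n - v 1)\<^sup>2"
proof -
  have "(\<Sum>i=1..n. v i * fb n v i) = (\<Sum>i\<in>{1, n}. v i * fb n v i)"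
    using assms by (intro sum.mono_neutral_right) (auto simp: fb_def)
  also have "\<dots> = - (v n - v 1)\<^sup>2"
    using assms by (simp add: fb_def power2_eq_square algebra_simps)
  finally show ?thesis .
qed

lemma cross_term_le:
  fixes k d X Y :: real
  assumes "d > 0"
  shows "k * X * Y - d * Y\<^sup>2 \<le> k\<^sup>2 * X\<^sup>2 / (4 * d)"
proof -
  have "4 * d * (k * X * Y - d * Y\<^sup>2) \<le> k\<^sup>2 * X\<^sup>2"
    using zero_le_power2[of "k * X - 2 * d * Y"] by (simp add: power2_eq_square algebra_simps)
  then show ?thesis using assms by (simp add: field_simps)
qed

lemma quadratic_minus_quartic_le:
  fixes K q X :: real
  assumes "q > 0"
  shows "K * X\<^sup>2 - q * X ^ 4 \<le> K\<^sup>2 / (4 * q)"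
proof -
  have "4 * q * (K * X\<^sup>2 - q * X ^ 4) \<le> K\<^sup>2"
    using zero_le_power2[of "K - 2 * q * X\<^sup>2"] by (simp add: power2_eq_square eval_nat_numeral algebra_simps)
  then show ?thesis using assms by (simp add: field_simps)
qed

text \<open>The sharp constant here would be \<open>b K\<^sup>2/(4\<delta>\<lambda>)\<close> with \<open>K = \<delta>\<^sup>2/(2b) + (2c - \<delta>)\<^sup>2/(4\<delta>)\<close>;
  the stated \<open>C\<^sub>2\<close> replaces \<open>K\<close> by the larger \<open>K + (2c + \<delta>)\<^sup>2/(4\<delta>)\<close>.\<close>

lemma fhn_pointwise_dissipation:
  fixes b c \<delta> lam \<beta> F X Y :: real
  assumes "b > 0" "\<delta> > 0" "lam > 0" "F * X \<le> - lam * X ^ 4 + \<beta>"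
  defines "C1 \<equiv> \<delta> / (2 * b)"
  shows "2 * C1 * (F * X) + (2 * c - \<delta>) * X * Y - \<delta> * Y\<^sup>2 + \<delta> * C1 * X\<^sup>2
     \<le> b / (4 * \<delta> * lam) * (\<delta>\<^sup>2 / (2 * b) + \<delta> / 2 + 2 * c\<^sup>2 / \<delta>)\<^sup>2 + \<delta> * \<beta> / b"
proof -
  define K where "K = \<delta> * C1 + (2 * c - \<delta>)\<^sup>2 / (4 * \<delta>)"
  define M where "M = \<delta>\<^sup>2 / (2 * b) + \<delta> / 2 + 2 * c\<^sup>2 / \<delta>"
  have C1_pos: "C1 > 0" using assms by (simp add: C1_def)
  have "M - K = (2 * c + \<delta>)\<^sup>2 / (4 * \<delta>)"
    unfolding M_def K_def C1_def using assms by (simp add: field_simps power2_eq_square)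
  moreover have "(2 * c + \<delta>)\<^sup>2 / (4 * \<delta>) \<ge> 0" using assms by simp
  moreover have "K \<ge> 0" using C1_pos assms by (simp add: K_def)
  ultimately have "K\<^sup>2 \<le> M\<^sup>2" by (intro power_mono) auto
  then have K_le: "K\<^sup>2 / (4 * (2 * C1 * lam)) \<le> b / (4 * \<delta> * lam) * M\<^sup>2"
    using assms by (simp add: C1_def field_simps)
  have "2 * C1 * (F * X) + (2 * c - \<delta>) * X * Y - \<delta> * Y\<^sup>2 + \<delta> * C1 * X\<^sup>2
      \<le> 2 * C1 * (- lam * X ^ 4 + \<beta>) + (2 * c - \<delta>)\<^sup>2 * X\<^sup>2 / (4 * \<delta>) + \<delta> * C1 * X\<^sup>2"
    using cross_term_le[OF \<open>\<delta> > 0\<close>, of "2 * c - \<delta>" X Y] assms(4) C1_pos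
    by (smt (verit) mult_left_mono)
  also have "\<dots> = (K * X\<^sup>2 - (2 * C1 * lam) * X ^ 4) + 2 * C1 * \<beta>"
    by (simp add: K_def algebra_simps)
  also have "\<dots> \<le> b / (4 * \<delta> * lam) * M\<^sup>2 + \<delta> * \<beta> / b"
    using quadratic_minus_quartic_le[of "2 * C1 * lam" K X] K_le C1_pos assms
    by (simp add: C1_def)
  finally show ?thesis by (simp add: M_def)
qed

lemma fhn_energy_rate_bound:
  fixes a b c \<delta> p lam \<beta> :: real and f :: "real \<Rightarrow> real"
  assumes "n \<ge> 2" "a > 0" "b > 0" "\<delta> > 0" "p > 0" "lam > 0"
    and "\<And>s. f s * s \<le> - lam * s ^ 4 + \<beta>"
  defines "C1 \<equiv> \<delta> / (2 * b)"
  shows "(\<Sum>i=1..n. 2 * C1 * v i * fhn_drift n a b p f v w i + 2 * w i * (c * v i - \<delta> * w i))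
           + \<delta> * weighted_energy n C1 v w
         \<le> real n * (b / (4 * \<delta> * lam) * (\<delta>\<^sup>2 / (2 * b) + \<delta> / 2 + 2 * c\<^sup>2 / \<delta>)\<^sup>2 + \<delta> * \<beta> / b)"
    (is "_ \<le> real n * ?B")
proof -
  have C1_pos: "C1 > 0" using assms by (simp add: C1_def)
  have "(\<Sum>i=1..n. 2 * C1 * v i * fhn_drift n a b p f v w i + 2 * w i * (c * v i - \<delta> * w i))
          + \<delta> * weighted_energy n C1 v w
      = 2 * C1 * a * (\<Sum>i=1..n. v i * discrete_laplacian n v i)
        + 2 * C1 * p * (\<Sum>i=1..n. v i * fb n v i)
        + (\<Sum>i=1..n. 2 * C1 * (f (v i) * v i) + (2 * c - \<delta>) * v i * w i - \<delta> * (w i)\<^sup>2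
                     + \<delta> * C1 * (v i)\<^sup>2)"
    using assms(3) unfolding fhn_drift_def weighted_energy_def
    by (simp add: sum_distrib_left sum.distrib[symmetric] C1_def power2_eq_square algebra_simps)
  also have "\<dots> \<le> 0 + 0 + (\<Sum>i=1..n. ?B)"
  proof (intro add_mono)
    show "2 * C1 * a * (\<Sum>i=1..n. v i * discrete_laplacian n v i) \<le> 0"
      using sum_mult_discrete_laplacian_nonpos[OF assms(1), of v] C1_pos assms(2)
      by (simp add: mult_nonneg_nonpos)
    show "2 * C1 * p * (\<Sum>i=1..n. v i * fb n v i) \<le> 0"
      using sum_mult_fb_eq[OF assms(1), of v] C1_pos assms(5) by (simp add: mult_nonneg_nonpos)
    show "(\<Sum>i=1..n. 2 * C1 * (f (v i) * v i) + (2 * c - \<delta>) * v i * w i - \<delta> * (w i)\<^sup>2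
                      + \<delta> * C1 * (v i)\<^sup>2) \<le> (\<Sum>i=1..n. ?B)"
      unfolding C1_def by (intro sum_mono fhn_pointwise_dissipation) (use assms in auto)
  qed
  finally show ?thesis by simp
qed

lemma FHN_solution_energy_derivative:
  assumes "FHN_solution n a b c \<delta> p f x0 y0 x y" "t > 0"
  shows "((\<lambda>s. weighted_energy n k (x s) (y s)) has_real_derivative
           (\<Sum>i=1..n. 2 * k * x t i * fhn_drift n a b p f (x t) (y t) i
                      + 2 * y t i * (c * x t i - \<delta> * y t i))) (at t)"
  unfolding weighted_energy_def
proof (rule DERIV_sum)
  fix i assume "i \<in> {1..n}"
  then have "((\<lambda>s. x s i) has_real_derivative fhn_drift n a b p f (x t) (y t) i) (at t)"
    and "((\<lambda>s. y s i) has_real_derivative c * x t i - \<delta> * y t i) (at t)"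
    using assms unfolding FHN_solution_def fhn_drift_def discrete_laplacian_def by auto
  then show "((\<lambda>s. k * (x s i)\<^sup>2 + (y s i)\<^sup>2) has_real_derivative
      2 * k * x t i * fhn_drift n a b p f (x t) (y t) i + 2 * y t i * (c * x t i - \<delta> * y t i)) (at t)"
    by (auto intro!: derivative_eq_intros)
qed

lemma FHN_solution_energy_continuous:
  assumes "FHN_solution n a b c \<delta> p f x0 y0 x y"
  shows "continuous_on {0..} (\<lambda>t. weighted_energy n k (x t) (y t))"
  using assms unfolding FHN_solution_def weighted_energy_def by (intro continuous_intros) auto

lemma FHN_solution_energy_initial:
  assumes "FHN_solution n a b c \<delta> p f x0 y0 x y"
  shows "weighted_energy n k (x 0) (y 0) = weighted_energy n k x0 y0"
  using assms unfolding FHN_solution_def weighted_energy_def by (intro sum.cong) auto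

text \<open>Gronwall: \<open>e\<^sup>\<delta>\<^sup>t (V t - R/\<delta>)\<close> is nonincreasing.\<close>

lemma linear_differential_inequality:
  fixes V :: "real \<Rightarrow> real"
  assumes "\<delta> > 0" "T \<ge> 0" "continuous_on {0..} V"
    and "\<And>t. t > 0 \<Longrightarrow> \<exists>D. (V has_real_derivative D) (at t) \<and> D + \<delta> * V t \<le> R"
  shows "V T \<le> exp (- \<delta> * T) * (V 0 - R / \<delta>) + R / \<delta>"
proof -
  define W where "W t = exp (\<delta> * t) * (V t - R / \<delta>)" for t
  have "W T \<le> W 0"
  proof (rule DERIV_nonpos_imp_decreasing_open[OF \<open>T \<ge> 0\<close>])
    fix t assume "0 < t" "t < T"
    then obtain D where D: "(V has_real_derivative D) (at t)" "D + \<delta> * V t \<le> R"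
      using assms(4) by blast
    have "(W has_real_derivative exp (\<delta> * t) * (D + \<delta> * V t - R)) (at t)"
      unfolding W_def[abs_def] using D(1) assms(1)
      by (auto intro!: derivative_eq_intros simp: field_simps)
    moreover have "exp (\<delta> * t) * (D + \<delta> * V t - R) \<le> 0"
      using D(2) by (simp add: mult_nonneg_nonpos)
    ultimately show "\<exists>y. (W has_real_derivative y) (at t) \<and> y \<le> 0" by blast
  next
    show "continuous_on {0..T} W"
      unfolding W_def[abs_def] by (intro continuous_intros continuous_on_subset[OF assms(3)]) auto
  qed
  then have "exp (- \<delta> * T) * W T \<le> exp (- \<delta> * T) * (V 0 - R / \<delta>)"
    by (simp add: W_def)
  also have "exp (- \<delta> * T) * W T = V T - R / \<delta>"
    by (simp add: W_def mult.assoc[symmetric] exp_add[symmetric])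
  finally show ?thesis by simp
qed

lemma sum_squares_le_weighted_energy:
  assumes "k > 0"
  shows "(\<Sum>i=1..n. \<bar>v i\<bar>\<^sup>2 + \<bar>w i\<bar>\<^sup>2) \<le> 1 / min k 1 * weighted_energy n k v w"
proof -
  have "min k 1 * (\<Sum>i=1..n. \<bar>v i\<bar>\<^sup>2 + \<bar>w i\<bar>\<^sup>2) \<le> weighted_energy n k v w"
    unfolding weighted_energy_def sum_distrib_left
  proof (rule sum_mono)
    fix i
    have "min k 1 * (v i)\<^sup>2 \<le> k * (v i)\<^sup>2" "min k 1 * (w i)\<^sup>2 \<le> (w i)\<^sup>2"
      using mult_right_mono[of "min k 1" k "(v i)\<^sup>2"] mult_right_mono[of "min k 1" 1 "(w i)\<^sup>2"]
      by auto
    then show "min k 1 * (\<bar>v i\<bar>\<^sup>2 + \<bar>w i\<bar>\<^sup>2) \<le> k * (v i)\<^sup>2 + (w i)\<^sup>2"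
      by (simp add: distrib_left)
  qed
  then show ?thesis using assms by (simp add: field_simps)
qed

lemma FHN_solution_norm_bound:
  fixes a b c \<delta> p lam \<beta> t :: real
  assumes "n \<ge> 2" "a > 0" "b > 0" "\<delta> > 0" "p > 0" "lam > 0"
    and f_dissipative: "\<And>s. f s * s \<le> - lam * s ^ 4 + \<beta>"
    and sol: "FHN_solution n a b c \<delta> p f x0 y0 x y"
    and "t \<ge> 0"
  defines "C1 \<equiv> \<delta> / (2 * b)"
    and "C2 \<equiv> b / (4 * \<delta> * lam) * (\<delta>\<^sup>2 / (2 * b) + \<delta> / 2 + 2 * c\<^sup>2 / \<delta>)\<^sup>2"
  shows "(\<Sum>i=1..n. \<bar>x t i\<bar>\<^sup>2 + \<bar>y t i\<bar>\<^sup>2)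
    \<le> 1 / min C1 1 * (exp (- \<delta> * t) * weighted_energy n C1 x0 y0 + real n / \<delta> * (C2 + \<delta> * \<beta> / b))"
proof -
  define R where "R = real n * (C2 + \<delta> * \<beta> / b)"
  have "\<beta> \<ge> 0" using f_dissipative[of 0] by simp
  then have "C1 > 0" "R \<ge> 0" using assms by (simp_all add: C1_def C2_def R_def)
  have "weighted_energy n C1 (x t) (y t)
        \<le> exp (- \<delta> * t) * (weighted_energy n C1 (x 0) (y 0) - R / \<delta>) + R / \<delta>"
    using \<open>\<delta> > 0\<close> \<open>t \<ge> 0\<close> FHN_solution_energy_continuous[OF sol]
  proof (rule linear_differential_inequality)
    show "\<exists>D. ((\<lambda>s. weighted_energy n C1 (x s) (y s)) has_real_derivative D) (at s)
            \<and> D + \<delta> * weighted_energy n C1 (x s) (y s) \<le> R" if "s > 0" for s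
      using FHN_solution_energy_derivative[OF sol that, of C1]
        fhn_energy_rate_bound[where v = "x s" and w = "y s" and c = c, OF _ _ _ _ _ _ f_dissipative] assms
      unfolding C1_def C2_def R_def by auto
  qed
  also have "\<dots> \<le> exp (- \<delta> * t) * weighted_energy n C1 x0 y0 + R / \<delta>"
    using \<open>R \<ge> 0\<close> \<open>\<delta> > 0\<close> FHN_solution_energy_initial[OF sol]
    by (simp add: right_diff_distrib)
  finally have "1 / min C1 1 * weighted_energy n C1 (x t) (y t)
      \<le> 1 / min C1 1 * (exp (- \<delta> * t) * weighted_energy n C1 x0 y0 + R / \<delta>)"
    using \<open>C1 > 0\<close> by (intro mult_left_mono) auto
  with sum_squares_le_weighted_energy[OF \<open>C1 > 0\<close>, where v = "x t" and w = "y t" and n = n]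
  show ?thesis by (simp add: R_def)
qed

theorem mainTheorem2:
  fixes n :: nat and a b c \<delta> p lam \<beta> \<gamma> :: real
    and f f' :: "real \<Rightarrow> real"
    and x0 y0 :: "nat \<Rightarrow> real" and x y :: "real \<Rightarrow> nat \<Rightarrow> real"
  assumes "n \<ge> 4"
    and "a > 0" "b > 0" "c > 0" "\<delta> > 0" "p > 0"
    and "lam > 0" "\<beta> > 0" "\<gamma> > 0"
    and "\<And>s. (f has_real_derivative f' s) (at s)"
    and "continuous_on UNIV f'"
    and "\<And>s. f s * s \<le> - lam * s ^ 4 + \<beta>"
    and "\<And>s. f' s \<le> \<gamma>"
    and "FHN_solution n a b c \<delta> p f x0 y0 x y"
  shows "\<forall>t\<ge>0.
    (let C1 = \<delta> / (2 * b);
         C2 = b / (4 * \<delta> * lam) * (\<delta>^2 / (2 * b) + \<delta> / 2 + 2 * c^2 / \<delta>)^2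
     in (\<Sum>i=1..n. (\<bar>x t i\<bar>^2 + \<bar>y t i\<bar>^2))
        \<le> 1 / min C1 1 * (exp (- \<delta> * t) * (\<Sum>i=1..n. (C1 * \<bar>x0 i\<bar>^2 + \<bar>y0 i\<bar>^2))
            + real n / \<delta> * (C2 + \<delta> * \<beta> / b)))"
proof (intro allI impI)
  fix t :: real assume "t \<ge> 0"
  with assms(1-3,5-7,12,14) show "let C1 = \<delta> / (2 * b);
         C2 = b / (4 * \<delta> * lam) * (\<delta>^2 / (2 * b) + \<delta> / 2 + 2 * c^2 / \<delta>)^2
     in (\<Sum>i=1..n. (\<bar>x t i\<bar>^2 + \<bar>y t i\<bar>^2))
        \<le> 1 / min C1 1 * (exp (- \<delta> * t) * (\<Sum>i=1..n. (C1 * \<bar>x0 i\<bar>^2 + \<bar>y0 i\<bar>^2))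
            + real n / \<delta> * (C2 + \<delta> * \<beta> / b))"
    using FHN_solution_norm_bound[of n a b \<delta> p lam f \<beta> c x0 y0 x y t]
    by (simp add: Let_def weighted_energy_def)
qed

end
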